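(* Let $n\ge 3$, let $F$ be a set of edges of $Q_n$, and let $B$ be a set of edges of $Q_n$ not in $F$ such that every Hamiltonian cycle of $Q_n-F$ contains every edge of $B$. Fix a dimension $i$, and let $f_i^e$ (resp. $f_i^o$) be the number of even (resp. odd) crossing edges of dimension $i$ that lie in $F$, and $b_i^e$ (resp. $b_i^o$) the number of even (resp. odd) crossing edges of dimension $i$ that lie in $B$. Then: (1) if $f_i^e=2^{n-2}$ or $f_i^o=2^{n-2}$, then $Q_n-F$ has no Hamiltonian cycle; (2) if $f_i^e+b_i^o>2^{n-2}$ or $f_i^o+b_i^e>2^{n-2}$, then $Q_n-F$ has no Hamiltonian cycle; (3) if $f_i^e+b_i^o=2^{n-2}$, then every Hamiltonian cycle of $Q_n-F$ contains every even crossing edge of dimension $i$ not in $F$, and every odd crossing edge of dimension $i$ contained in a Hamiltonian cycle of $Q_n-F$ belongs to $B$; (4) if $f_i^o+b_i^e=2^{n-2}$, then every Hamiltonian cycle of $Q_n-F$ contains every odd crossing edge of dimension $i$ not in $F$, and every even crossing edge of dimension $i$ contained in a Hamiltonian cycle of $Q_n-F$ belongs to $B$; (5) if $f_i^e=2^{n-2}-1$ (resp. $f_i^o=2^{n-2}-1$), then the unique even (resp. odd) crossing edge of dimension $i$ not in $F$ belongs to every Hamiltonian cycle of $Q_n-F$.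
   Context: $Q_n$ is the $n$-dimensional hypercube on the binary strings $x=x_{n-1}\dots x_0$, two strings adjacent iff they differ in exactly one bit; $x^{(i)}$ denotes $x$ with bit $i$ flipped. The parity of a vertex is the number of ones in its label modulo 2. $F$ is a set of "faulty" edges and $Q_n-F$ is the graph on all vertices of $Q_n$ with the edges of $Q_n$ not in $F$. For a dimension $i$, let $Q^L=\{x:x_i=0\}$; the crossing edges of dimension $i$ are the $2^{n-1}$ edges $(u,u^{(i)})$ with $u\in Q^L$; such an edge is even if $u$ has parity 0 and odd if $u$ has parity 1 (so there are $2^{n-2}$ even and $2^{n-2}$ odd crossing edges). *)

theory Defs
  imports Main
begin

text \<open>A binary string x = x_{n-1}...x_0 is represented by the set of positions
  carrying a one, a subset of {..<n}.\<close>

definition qverts :: "nat \<Rightarrow> nat set set" where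
  "qverts n = {x. x \<subseteq> {..<n}}"

definition flip :: "nat set \<Rightarrow> nat \<Rightarrow> nat set" where
  "flip x i = (if i \<in> x then x - {i} else insert i x)"

definition parity :: "nat set \<Rightarrow> nat" where
  "parity x = card x mod 2"

definition qedges :: "nat \<Rightarrow> nat set set set" where
  "qedges n = {{u, flip u i} | u i. u \<in> qverts n \<and> i < n}"

definition even_cross :: "nat \<Rightarrow> nat \<Rightarrow> nat set set set" where
  "even_cross n i = {{u, flip u i} | u. u \<in> qverts n \<and> i \<notin> u \<and> parity u = 0}"

definition odd_cross :: "nat \<Rightarrow> nat \<Rightarrow> nat set set set" where
  "odd_cross n i = {{u, flip u i} | u. u \<in> qverts n \<and> i \<notin> u \<and> parity u = 1}"

definition ham_cycle :: "'a set \<Rightarrow> 'a set set \<Rightarrow> 'a set set \<Rightarrow> bool" where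
  "ham_cycle V E C \<longleftrightarrow> (\<exists>vs. distinct vs \<and> set vs = V \<and> length vs \<ge> 3 \<and>
      C = {{vs ! k, vs ! ((k + 1) mod length vs)} | k. k < length vs} \<and> C \<subseteq> E)"

definition qham :: "nat \<Rightarrow> nat set set set \<Rightarrow> nat set set set \<Rightarrow> bool" where
  "qham n F C \<longleftrightarrow> ham_cycle (qverts n) (qedges n - F) C"

end

theory Submission
  imports Defs
begin

text \<open>Give a vertex v the weight (-1)^|v| if v_i = 0 and 0 otherwise. The weights of Q_n sum to 0,
  and an edge has endpoint weights summing to +1, -1 or 0 according as it is an even crossing edge,
  an odd crossing edge, or neither. A Hamiltonian cycle counts every vertex twice, so it contains
  as many even as odd crossing edges of dimension i, and it contains at least one crossing edge since
  it visits both halves x_i = 0 and x_i = 1. Now an even count bounded above by 2^(n-2) - f_i^e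
  (the cycle avoids F) and an odd count bounded below by b_i^o (the cycle contains B) yield all
  five statements by counting.\<close>

lemma card_Pow_even_odd:
  assumes "finite A" "A \<noteq> {}"
  shows "card {x\<in>Pow A. even (card x)} = 2 ^ (card A - 1)"
    and "card {x\<in>Pow A. odd (card x)} = 2 ^ (card A - 1)"
proof -
  let ?E = "{x\<in>Pow A. even (card x)}" and ?O = "{x\<in>Pow A. odd (card x)}"
  have "card ?E = card ?O"
    using card_subsupersets_even_odd[of A "{}"] assms by (simp add: Pow_def psubset_eq)
  moreover have "card ?E + card ?O = 2 ^ card A"
  proof -
    have "card ?E + card ?O = card (Pow A)"
      using assms(1) by (subst card_Un_disjoint[symmetric]) (auto intro: arg_cong[where f = card])
    then show ?thesis using assms(1) by (simp add: card_Pow)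
  qed
  moreover have "card A \<noteq> 0" using assms by simp
  ultimately show "card ?E = 2 ^ (card A - 1)" "card ?O = 2 ^ (card A - 1)"
    by (simp_all add: power_eq_if)
qed

lemma ham_cycle_subset: "ham_cycle V E C \<Longrightarrow> C \<subseteq> E"
  unfolding ham_cycle_def by blast

lemma ham_cycle_finite: "ham_cycle V E C \<Longrightarrow> finite C"
  unfolding ham_cycle_def by auto

lemma ham_cycleE:
  assumes "ham_cycle V E C"
  obtains vs where "distinct vs" "set vs = V" "3 \<le> length vs"
    "C = (\<lambda>k. {vs ! k, vs ! ((k + 1) mod length vs)}) ` {..<length vs}" "C \<subseteq> E"
proof -
  obtain vs where "distinct vs" "set vs = V" "3 \<le> length vs" "C \<subseteq> E"
    and C: "C = {{vs ! k, vs ! ((k + 1) mod length vs)} | k. k < length vs}"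
    using assms unfolding ham_cycle_def by blast
  moreover have "C = (\<lambda>k. {vs ! k, vs ! ((k + 1) mod length vs)}) ` {..<length vs}"
    unfolding C by auto
  ultimately show thesis using that by blast
qed

lemma sum_lessThan_rotate:
  fixes m :: nat
  shows "(\<Sum>k<m. f ((k + 1) mod m)) = (\<Sum>k<m. f k)"
proof (cases m)
  case (Suc m')
  have "(\<Sum>k<Suc m'. f (Suc k mod Suc m')) = (\<Sum>k<m'. f (Suc k)) + f 0"
    by (simp add: sum.lessThan_Suc)
  also have "\<dots> = (\<Sum>k<Suc m'. f k)"
    by (subst sum.lessThan_Suc_shift) (simp add: add.commute)
  finally show ?thesis using Suc by simp
qed simp

lemma mod_add_two_neq:
  assumes "k < m" "3 \<le> (m::nat)"
  shows "(k + 2) mod m \<noteq> k"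
proof (cases "k + 2 < m")
  case False
  then have "(k + 2) mod m = k + 2 - m" using assms by (simp add: mod_if)
  then show ?thesis using assms False by linarith
qed simp

lemma inj_on_cycle_edges:
  assumes "distinct vs" "3 \<le> length vs"
  shows "inj_on (\<lambda>k. {vs ! k, vs ! ((k + 1) mod length vs)}) {..<length vs}"
proof (rule inj_onI)
  let ?m = "length vs"
  fix k j assume k: "k \<in> {..<?m}" and j: "j \<in> {..<?m}"
    and eq: "{vs ! k, vs ! ((k + 1) mod ?m)} = {vs ! j, vs ! ((j + 1) mod ?m)}"
  have nth_eq: "vs ! a = vs ! b \<longleftrightarrow> a = b" if "a < ?m" "b < ?m" for a b
    using assms(1) that by (simp add: nth_eq_iff_index_eq)
  have succ: "(a + 1) mod ?m < ?m" for a using assms(2) by (intro mod_less_divisor) linarith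
  show "k = j"
  proof (rule ccontr)
    assume "k \<noteq> j"
    then have "k = (j + 1) mod ?m" "j = (k + 1) mod ?m"
      using eq k j succ nth_eq by (auto simp: doubleton_eq_iff)
    then have "k = (k + 2) mod ?m" by (simp add: mod_simps)
    moreover have "(k + 2) mod ?m \<noteq> k" using k assms(2) mod_add_two_neq[of k ?m] by blast
    ultimately show False by argo
  qed
qed

lemma ham_cycle_sum_endpoints:
  fixes w :: "'a \<Rightarrow> 'b::comm_semiring_1"
  assumes "ham_cycle V E C"
  shows "(\<Sum>e\<in>C. \<Sum>v\<in>e. w v) = 2 * (\<Sum>v\<in>V. w v)"
proof -
  obtain vs where vs: "distinct vs" "set vs = V" "3 \<le> length vs"
    and C: "C = (\<lambda>k. {vs ! k, vs ! ((k + 1) mod length vs)}) ` {..<length vs}"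
    using assms by (rule ham_cycleE)
  let ?m = "length vs"
  have sum_V: "(\<Sum>v\<in>V. w v) = (\<Sum>k<?m. w (vs ! k))"
    by (rule sum.reindex_bij_betw[OF bij_betw_nth[OF vs(1) refl vs(2)[symmetric]], symmetric])
  have "(\<Sum>e\<in>C. \<Sum>v\<in>e. w v) = (\<Sum>k<?m. \<Sum>v\<in>{vs ! k, vs ! ((k + 1) mod ?m)}. w v)"
    by (rule sum.reindex_cong[OF inj_on_cycle_edges[OF vs(1,3)] C refl])
  also have "\<dots> = (\<Sum>k<?m. w (vs ! k) + w (vs ! ((k + 1) mod ?m)))"
  proof (rule sum.cong[OF refl])
    fix k assume "k \<in> {..<?m}"
    then have "k < ?m" by simp
    have "(k + 1) mod ?m \<noteq> k" using \<open>k < ?m\<close> vs(3) by (cases "k + 1 < ?m") (auto simp: mod_if)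
    moreover have "(k + 1) mod ?m < ?m" using vs(3) by (intro mod_less_divisor) linarith
    ultimately show "(\<Sum>v\<in>{vs ! k, vs ! ((k + 1) mod ?m)}. w v) = w (vs ! k) + w (vs ! ((k + 1) mod ?m))"
      using \<open>k < ?m\<close> vs(1) by (simp add: nth_eq_iff_index_eq)
  qed
  also have "\<dots> = 2 * (\<Sum>v\<in>V. w v)"
    using sum_lessThan_rotate[of "\<lambda>k. w (vs ! k)" ?m] by (simp add: sum.distrib sum_V mult_2)
  finally show ?thesis .
qed

lemma ham_cycle_crosses:
  assumes "ham_cycle V E C" "a \<in> V" "b \<in> V" "a \<in> S" "b \<notin> S"
  shows "\<exists>e\<in>C. \<exists>x\<in>e. \<exists>y\<in>e. x \<in> S \<and> y \<notin> S"
proof -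
  obtain vs where vs: "set vs = V"
    and C: "C = (\<lambda>k. {vs ! k, vs ! ((k + 1) mod length vs)}) ` {..<length vs}"
    using assms(1) by (rule ham_cycleE)
  let ?m = "length vs"
  define P where "P k \<longleftrightarrow> vs ! k \<in> S" for k
  obtain ka kb where "ka < ?m" "P ka" "kb < ?m" "\<not> P kb"
    using assms(2-5) vs unfolding P_def by (metis in_set_conv_nth)
  have "\<exists>k<?m. P k \<noteq> P ((k + 1) mod ?m)"
  proof (rule ccontr)
    assume "\<not> ?thesis"
    then have step: "P k = P ((k + 1) mod ?m)" if "k < ?m" for k
      using that by blast
    have "k < ?m \<Longrightarrow> P k = P 0" for k
    proof (induction k)
      case (Suc k)
      then have "(k + 1) mod ?m = Suc k" by simp
      then show ?case using Suc step[of k] by simp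
    qed simp
    then show False using \<open>ka < ?m\<close> \<open>P ka\<close> \<open>kb < ?m\<close> \<open>\<not> P kb\<close> by blast
  qed
  then obtain k where k: "k < ?m" "P k \<noteq> P ((k + 1) mod ?m)" by blast
  then have "{vs ! k, vs ! ((k + 1) mod ?m)} \<in> C" unfolding C by blast
  moreover have "\<exists>x\<in>{vs ! k, vs ! ((k + 1) mod ?m)}. \<exists>y\<in>{vs ! k, vs ! ((k + 1) mod ?m)}. x \<in> S \<and> y \<notin> S"
    using k(2) unfolding P_def by auto
  ultimately show ?thesis by (rule bexI[rotated])
qed

text \<open>Instantiated with H = qham n F, with X and Y the even and odd crossing edges of dimension i
  (in either order), and with N = 2^(n-2).\<close>

locale balanced_family =
  fixes H :: "'a set \<Rightarrow> bool" and X Y F B :: "'a set" and N :: nat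
  assumes finite_X: "finite X"
    and card_X: "card X = N"
    and finite_member: "H C \<Longrightarrow> finite C"
    and balanced: "H C \<Longrightarrow> card (C \<inter> X) = card (C \<inter> Y)"
    and meets_X: "H C \<Longrightarrow> C \<inter> X \<noteq> {}"
    and avoids_F: "H C \<Longrightarrow> C \<inter> F = {}"
    and contains_B: "H C \<Longrightarrow> B \<subseteq> C"
begin

lemma card_X_split: "N = card (F \<inter> X) + card (X - F)"
  using card_Int_Diff[OF finite_X, of F] card_X by (simp add: Int_commute)

lemma member_Int_X_subset: "H C \<Longrightarrow> C \<inter> X \<subseteq> X - F"
  using avoids_F by blast

lemma card_member_Int_X_le: "H C \<Longrightarrow> card (C \<inter> X) \<le> card (X - F)"
  using finite_X by (intro card_mono member_Int_X_subset) auto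

lemma card_B_Int_Y_le: "H C \<Longrightarrow> card (B \<inter> Y) \<le> card (C \<inter> X)"
  using card_mono[of "C \<inter> Y" "B \<inter> Y"] finite_member contains_B balanced by fastforce

lemma card_member_Int_X_pos: "H C \<Longrightarrow> 0 < card (C \<inter> X)"
  using meets_X finite_member by (simp add: card_gt_0_iff)

lemma free_X_subset_member_if_card_le: "H C \<Longrightarrow> card (X - F) \<le> card (C \<inter> X) \<Longrightarrow> X - F \<subseteq> C"
  using card_seteq[OF _ member_Int_X_subset] finite_X by blast

lemma no_member_if_X_subset_F:
  assumes "card (F \<inter> X) = N"
  shows "\<not> H C"
proof
  assume "H C"
  from card_member_Int_X_le[OF this] card_member_Int_X_pos[OF this] card_X_split assms
  show False by linarith
qed

lemma no_member_if_overloaded: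
  assumes "N < card (F \<inter> X) + card (B \<inter> Y)"
  shows "\<not> H C"
proof
  assume "H C"
  from card_member_Int_X_le[OF this] card_B_Int_Y_le[OF this] card_X_split assms
  show False by linarith
qed

lemma free_X_subset_member_if_tight:
  assumes "card (F \<inter> X) + card (B \<inter> Y) = N" "H C"
  shows "X - F \<subseteq> C"
  using assms card_B_Int_Y_le[OF assms(2)] card_X_split
  by (intro free_X_subset_member_if_card_le) linarith+

lemma member_Int_Y_subset_B_if_tight:
  assumes "card (F \<inter> X) + card (B \<inter> Y) = N" "H C"
  shows "C \<inter> Y \<subseteq> B"
proof -
  have "card (C \<inter> Y) \<le> card (B \<inter> Y)"
    using assms card_member_Int_X_le[OF assms(2)] balanced[OF assms(2)] card_X_split by linarith
  then have "B \<inter> Y = C \<inter> Y"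
    using finite_member[OF assms(2)] contains_B[OF assms(2)] by (intro card_seteq) auto
  then show ?thesis by blast
qed

lemma ex1_free_X_if_single:
  assumes "card (F \<inter> X) = N - 1" "0 < N"
  shows "\<exists>!e. e \<in> X - F"
proof -
  have "card (X - F) = 1" using assms card_X_split by linarith
  then show ?thesis by (metis card_1_singletonE singleton_iff)
qed

lemma free_X_subset_member_if_single:
  assumes "card (F \<inter> X) = N - 1" "H C"
  shows "X - F \<subseteq> C"
  using assms card_member_Int_X_pos[OF assms(2)] card_member_Int_X_le[OF assms(2)] card_X_split
  by (intro free_X_subset_member_if_card_le) linarith+

end

definition dim_edges :: "nat \<Rightarrow> nat \<Rightarrow> (nat \<Rightarrow> bool) \<Rightarrow> nat set set set" where
  "dim_edges n i P = (\<lambda>u. {u, insert i u}) ` {u \<in> Pow ({..<n} - {i}). P (card u)}"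

lemma flip_notin: "i \<notin> u \<Longrightarrow> flip u i = insert i u"
  by (simp add: flip_def)

lemma cross_eq_dim_edges:
  "{{u, flip u i} | u. u \<in> qverts n \<and> i \<notin> u \<and> P (card u)} = dim_edges n i P"
proof -
  have "{{u, flip u i} | u. u \<in> qverts n \<and> i \<notin> u \<and> P (card u)}
      = (\<lambda>u. {u, flip u i}) ` {u. u \<in> qverts n \<and> i \<notin> u \<and> P (card u)}"
    by auto
  also have "\<dots> = (\<lambda>u. {u, insert i u}) ` {u \<in> Pow ({..<n} - {i}). P (card u)}"
  proof (rule image_cong)
    fix u assume "u \<in> {u \<in> Pow ({..<n} - {i}). P (card u)}"
    then have "i \<notin> u" by blast
    then show "{u, flip u i} = {u, insert i u}" by (simp add: flip_notin)
  qed (unfold qverts_def, blast)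
  finally show ?thesis unfolding dim_edges_def .
qed

lemma even_cross_eq_dim_edges: "even_cross n i = dim_edges n i even"
  using cross_eq_dim_edges[of i n even]
  by (simp add: even_cross_def parity_def even_iff_mod_2_eq_zero)

lemma odd_cross_eq_dim_edges: "odd_cross n i = dim_edges n i odd"
  using cross_eq_dim_edges[of i n odd]
  by (simp add: odd_cross_def parity_def odd_iff_mod_2_eq_one)

lemma inj_on_insert_pair: "inj_on (\<lambda>u. {u, insert i u}) {u. i \<notin> u}"
  unfolding inj_on_def by (metis doubleton_eq_iff insertI1 mem_Collect_eq)

lemma pair_in_dim_edges_iff:
  assumes "i \<notin> x"
  shows "{x, insert i x} \<in> dim_edges n i P \<longleftrightarrow> x \<subseteq> {..<n} \<and> P (card x)"
proof -
  have "{x, insert i x} \<in> dim_edges n i P \<longleftrightarrow> x \<in> {u \<in> Pow ({..<n} - {i}). P (card u)}"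
    unfolding dim_edges_def using assms by (intro inj_on_image_mem_iff[OF inj_on_insert_pair]) auto
  then show ?thesis using assms by auto
qed

lemma card_dim_edges:
  "card (dim_edges n i P) = card {u \<in> Pow ({..<n} - {i}). P (card u)}"
  unfolding dim_edges_def by (rule card_image, rule inj_on_subset[OF inj_on_insert_pair]) auto

lemma finite_dim_edges: "finite (dim_edges n i P)"
  by (simp add: dim_edges_def)

lemma finite_even_cross: "finite (even_cross n i)"
  by (simp add: even_cross_eq_dim_edges finite_dim_edges)

lemma finite_odd_cross: "finite (odd_cross n i)"
  by (simp add: odd_cross_eq_dim_edges finite_dim_edges)

lemma lessThan_Diff_singleton_nonempty:
  fixes n i :: nat
  assumes "2 \<le> n"
  shows "{..<n} - {i} \<noteq> {}"
proof -
  have "(if i = 0 then 1 else 0) \<in> {..<n} - {i}" using assms by auto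
  then show ?thesis by blast
qed

lemma card_even_cross_odd_cross:
  assumes "2 \<le> n" "i < n"
  shows "card (even_cross n i) = 2 ^ (n - 2)" and "card (odd_cross n i) = 2 ^ (n - 2)"
proof -
  have "{..<n} - {i} \<noteq> {}" using assms(1) by (rule lessThan_Diff_singleton_nonempty)
  moreover have "card ({..<n} - {i}) - 1 = n - 2" using assms by simp
  ultimately show "card (even_cross n i) = 2 ^ (n - 2)" "card (odd_cross n i) = 2 ^ (n - 2)"
    using card_Pow_even_odd[of "{..<n} - {i}"]
    by (simp_all add: even_cross_eq_dim_edges odd_cross_eq_dim_edges card_dim_edges)
qed

lemma qedgesE:
  assumes "e \<in> qedges n"
  obtains u j where "e = {u, flip u j}" "u \<subseteq> {..<n}" "j < n"
  using assms unfolding qedges_def qverts_def by blast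

lemma mem_flip_iff: "i \<noteq> j \<Longrightarrow> i \<in> flip u j \<longleftrightarrow> i \<in> u"
  by (auto simp: flip_def)

lemma flip_neq: "flip u j \<noteq> u"
  by (auto simp: flip_def)

lemma even_card_flip: "finite u \<Longrightarrow> even (card (flip u j)) \<longleftrightarrow> odd (card u)"
  by (cases "j \<in> u") (auto simp: flip_def card_Diff_singleton_if)

lemma doubleton_flip_eq: "{u, flip u i} = {u - {i}, insert i (u - {i})}"
  by (auto simp: flip_def)

lemma flip_edge_notin_dim_edges:
  assumes "j \<noteq> i"
  shows "{u, flip u j} \<notin> dim_edges n i P"
proof
  assume "{u, flip u j} \<in> dim_edges n i P"
  then obtain x where "i \<notin> x" "{u, flip u j} = {x, insert i x}"
    unfolding dim_edges_def by blast
  then have "(i \<in> u) \<noteq> (i \<in> flip u j)" by (auto simp: doubleton_eq_iff)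
  then show False using mem_flip_iff[OF assms[symmetric]] by simp
qed

definition cross_weight :: "nat \<Rightarrow> nat set \<Rightarrow> int" where
  "cross_weight i v = (if i \<in> v then 0 else (-1) ^ card v)"

lemma sum_cross_weight_qedge:
  assumes "e \<in> qedges n"
  shows "(\<Sum>v\<in>e. cross_weight i v) = of_bool (e \<in> even_cross n i) - of_bool (e \<in> odd_cross n i)"
proof -
  obtain u j where e: "e = {u, flip u j}" and u: "u \<subseteq> {..<n}"
    using assms by (rule qedgesE)
  show ?thesis
  proof (cases "j = i")
    case True
    define x where "x = u - {i}"
    have e_eq: "e = {x, insert i x}" and x: "i \<notin> x" "x \<subseteq> {..<n}"
      using e u doubleton_flip_eq unfolding True x_def by auto
    have "x \<noteq> insert i x" using x(1) by blast
    then have "(\<Sum>v\<in>e. cross_weight i v) = (-1) ^ card x"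
      using x(1) by (simp add: e_eq cross_weight_def)
    then show ?thesis
      using x by (simp add: e_eq even_cross_eq_dim_edges odd_cross_eq_dim_edges
          pair_in_dim_edges_iff)
  next
    case False
    have "finite u" using u finite_subset by blast
    then have "cross_weight i u + cross_weight i (flip u j) = 0"
      using even_card_flip[of u j] mem_flip_iff[of i j u] False
      by (auto simp: cross_weight_def minus_one_power_iff)
    then show ?thesis
      using False flip_neq[of u j]
      by (simp add: e even_cross_eq_dim_edges odd_cross_eq_dim_edges flip_edge_notin_dim_edges)
  qed
qed

lemma sum_cross_weight_qverts:
  assumes "2 \<le> n"
  shows "(\<Sum>v\<in>qverts n. cross_weight i v) = 0"
proof -
  have "{..<n} - {i} \<noteq> {}" using assms(1) by (rule lessThan_Diff_singleton_nonempty)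
  have "(\<Sum>v\<in>qverts n. cross_weight i v) = (\<Sum>v\<in>Pow ({..<n} - {i}). (-1) ^ card v)"
    unfolding qverts_def cross_weight_def by (rule sum.mono_neutral_cong_right) auto
  also have "\<dots> = 0"
    by (rule sum_alternating_cancels)
       (use card_Pow_even_odd[OF _ \<open>{..<n} - {i} \<noteq> {}\<close>] in auto)
  finally show ?thesis .
qed

lemma qedge_between_sides:
  assumes "e \<in> qedges n" "x \<in> e" "y \<in> e" "i \<in> x" "i \<notin> y"
  shows "e \<in> even_cross n i \<union> odd_cross n i"
proof -
  obtain u j where e: "e = {u, flip u j}" and u: "u \<subseteq> {..<n}"
    using assms(1) by (rule qedgesE)
  have "j = i" using assms mem_flip_iff[of i j u] unfolding e by auto
  then have "e = {u - {i}, insert i (u - {i})}" using e doubleton_flip_eq by simp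
  then show ?thesis
    using u pair_in_dim_edges_iff[of i "u - {i}"]
    by (auto simp: even_cross_eq_dim_edges odd_cross_eq_dim_edges)
qed

lemma qham_card_even_cross_eq_odd_cross:
  assumes "2 \<le> n" "i < n" "qham n F C"
  shows "card (C \<inter> even_cross n i) = card (C \<inter> odd_cross n i)"
proof -
  have ham: "ham_cycle (qverts n) (qedges n - F) C" using assms(3) unfolding qham_def .
  have "finite C" "C \<subseteq> qedges n"
    using ham_cycle_finite[OF ham] ham_cycle_subset[OF ham] by auto
  have "0 = 2 * (\<Sum>v\<in>qverts n. cross_weight i v)"
    using sum_cross_weight_qverts[OF assms(1)] by simp
  also have "\<dots> = (\<Sum>e\<in>C. \<Sum>v\<in>e. cross_weight i v)"
    by (rule ham_cycle_sum_endpoints[OF ham, symmetric])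
  also have "\<dots> = (\<Sum>e\<in>C. of_bool (e \<in> even_cross n i) - of_bool (e \<in> odd_cross n i))"
    using \<open>C \<subseteq> qedges n\<close> by (intro sum.cong) (auto simp: sum_cross_weight_qedge)
  also have "\<dots> = int (card (C \<inter> even_cross n i)) - int (card (C \<inter> odd_cross n i))"
    using \<open>finite C\<close> by (simp add: sum_subtractf sum_of_bool_eq Int_def)
  finally show ?thesis by simp
qed

lemma qham_meets_crossing_edges:
  assumes "i < n" "qham n F C"
  shows "C \<inter> (even_cross n i \<union> odd_cross n i) \<noteq> {}"
proof -
  have ham: "ham_cycle (qverts n) (qedges n - F) C" using assms(2) unfolding qham_def .
  then have "C \<subseteq> qedges n" using ham_cycle_subset by fastforce
  have "{i} \<in> qverts n" "{} \<in> qverts n" using assms(1) by (auto simp: qverts_def)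
  then obtain e x y where "e \<in> C" "x \<in> e" "y \<in> e" "i \<in> x" "i \<notin> y"
    using ham_cycle_crosses[OF ham, of "{i}" "{}" "{v. i \<in> v}"] by auto
  then show ?thesis using qedge_between_sides \<open>C \<subseteq> qedges n\<close> by blast
qed

lemma
  assumes "2 \<le> n" "i < n" "qham n F C"
  shows qham_meets_even_cross: "C \<inter> even_cross n i \<noteq> {}"
    and qham_meets_odd_cross: "C \<inter> odd_cross n i \<noteq> {}"
proof -
  have "finite C" using assms(3) unfolding qham_def by (rule ham_cycle_finite)
  then show "C \<inter> even_cross n i \<noteq> {}" "C \<inter> odd_cross n i \<noteq> {}"
    using qham_meets_crossing_edges[OF assms(2,3)] qham_card_even_cross_eq_odd_cross[OF assms]
    by (metis Int_Un_distrib Un_empty card_0_eq finite_Int)+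
qed

theorem lemma6:
  fixes n i :: nat and F B :: "nat set set set"
  assumes n3: "n \<ge> 3"
    and F: "F \<subseteq> qedges n"
    and B: "B \<subseteq> qedges n - F"
    and Bforced: "\<forall>C. qham n F C \<longrightarrow> B \<subseteq> C"
    and i: "i < n"
  defines "fe \<equiv> card (F \<inter> even_cross n i)"
    and "fo \<equiv> card (F \<inter> odd_cross n i)"
    and "be \<equiv> card (B \<inter> even_cross n i)"
    and "bo \<equiv> card (B \<inter> odd_cross n i)"
  shows
    "((fe = 2^(n-2) \<or> fo = 2^(n-2)) \<longrightarrow> \<not> (\<exists>C. qham n F C))
     \<and> ((fe + bo > 2^(n-2) \<or> fo + be > 2^(n-2)) \<longrightarrow> \<not> (\<exists>C. qham n F C))
     \<and> (fe + bo = 2^(n-2) \<longrightarrow>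
          (\<forall>C. qham n F C \<longrightarrow> even_cross n i - F \<subseteq> C)
          \<and> (\<forall>e \<in> odd_cross n i. (\<exists>C. qham n F C \<and> e \<in> C) \<longrightarrow> e \<in> B))
     \<and> (fo + be = 2^(n-2) \<longrightarrow>
          (\<forall>C. qham n F C \<longrightarrow> odd_cross n i - F \<subseteq> C)
          \<and> (\<forall>e \<in> even_cross n i. (\<exists>C. qham n F C \<and> e \<in> C) \<longrightarrow> e \<in> B))
     \<and> (fe = 2^(n-2) - 1 \<longrightarrow>
          (\<exists>!e. e \<in> even_cross n i - F) \<and>
          (\<forall>e \<in> even_cross n i - F. \<forall>C. qham n F C \<longrightarrow> e \<in> C))
     \<and> (fo = 2^(n-2) - 1 \<longrightarrow>
          (\<exists>!e. e \<in> odd_cross n i - F) \<and>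
          (\<forall>e \<in> odd_cross n i - F. \<forall>C. qham n F C \<longrightarrow> e \<in> C))"
proof -
  have n2: "2 \<le> n" using n3 by simp
  note card_cross = card_even_cross_odd_cross[OF n2 i]
  have ham: "ham_cycle (qverts n) (qedges n - F) C" if "qham n F C" for C
    using that unfolding qham_def .
  have "qham n F C \<Longrightarrow> C \<inter> F = {}" for C
    using ham_cycle_subset[OF ham] by blast
  note qham_facts = this ham_cycle_finite[OF ham] Bforced
    qham_card_even_cross_eq_odd_cross[OF n2 i] qham_meets_even_cross[OF n2 i]
    qham_meets_odd_cross[OF n2 i] finite_even_cross finite_odd_cross
  interpret even: balanced_family "qham n F" "even_cross n i" "odd_cross n i" F B "2 ^ (n - 2)"
    using qham_facts card_cross by unfold_locales auto
  interpret odd: balanced_family "qham n F" "odd_cross n i" "even_cross n i" F B "2 ^ (n - 2)"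
    using qham_facts card_cross by unfold_locales auto
  show ?thesis
    unfolding fe_def fo_def be_def bo_def
    apply (intro conjI impI)
    subgoal using even.no_member_if_X_subset_F odd.no_member_if_X_subset_F by blast
    subgoal using even.no_member_if_overloaded odd.no_member_if_overloaded by blast
    subgoal using even.free_X_subset_member_if_tight by blast
    subgoal using even.member_Int_Y_subset_B_if_tight by blast
    subgoal using odd.free_X_subset_member_if_tight by blast
    subgoal using odd.member_Int_Y_subset_B_if_tight by blast
    subgoal using even.ex1_free_X_if_single by simp
    subgoal using even.free_X_subset_member_if_single by blast
    subgoal using odd.ex1_free_X_if_single by simp
    subgoal using odd.free_X_subset_member_if_single by blast
    done
qed

end
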